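(* Let $\gamma$ be a gauge on $\mathbb{R}^d$ and $(D,w)$ a finite positively weighted set. Then the contamination locus $\mathrm{CL}_\gamma(D,w)$ is connected, satisfies $\mathrm{FW}_\gamma(D,w)\subseteq\mathrm{CL}_\gamma(D,w)\subseteq\mathrm{EH}_\gamma(D)$, and is a union of (bounded) elementary convex sets for $D$.
   Context: A gauge $\gamma$ on $\mathbb{R}^d$ is the Minkowski functional of a convex compact set $B_\gamma$ with the origin in its interior (not necessarily symmetric); its skewness is $\sigma=\sup_{x\ne0}\gamma(x)/\gamma(-x)$; $\gamma^\circ$ is the dual gauge with unit ball $B_{\gamma^\circ}$. $\mathrm{FW}_\gamma(S,u)$ is the set of minimizers of $x\mapsto\sum_{s\in S}u_s\gamma(x-s)$. $(D,w)+(C,v)$ denotes $D\cup C$ with weights added at common points; $w_D=\sum_d w_d$. The contamination locus is $\mathrm{CL}_\gamma(D,w)=\bigcup\mathrm{FW}_\gamma((D,w)+(C,v))$, the union over all nonempty finite positively weighted sets $(C,v)$ with $\sigma v_C<w_D$. For $p\in B_{\gamma^\circ}$: if $\gamma^\circ(p)=1$, $N(p)=\mathbb{R}_{\ge0}F(p)$ with $F(p)=\{x\in B_\gamma:\langle p,x\rangle=1\}$; otherwise $N(p)=\{0\}$. For finite $S$ and $\pi=(p_s)_{s\in S}\subset B_{\gamma^\circ}$, $C_\pi=\bigcap_{s\in S}(s+N(p_s))$; a nonempty $C_\pi$ is an elementary convex set for $S$; $\mathrm{EH}_\gamma(S)$ is the union of all bounded elementary convex sets for $S$. *)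

theory Defs
  imports "HOL-Analysis.Analysis"
begin

text \<open>A gauge is given by its unit ball B: convex, compact, with 0 in the interior.\<close>
definition gauge_ball :: "'a::euclidean_space set \<Rightarrow> bool" where
  "gauge_ball B \<longleftrightarrow> convex B \<and> compact B \<and> 0 \<in> interior B"

definition gauge :: "'a::euclidean_space set \<Rightarrow> 'a \<Rightarrow> real" where
  "gauge B x = Inf {t. 0 < t \<and> x \<in> (\<lambda>y. t *\<^sub>R y) ` B}"

definition dual_gauge :: "'a::euclidean_space set \<Rightarrow> 'a \<Rightarrow> real" where
  "dual_gauge B p = Sup ((\<lambda>x. p \<bullet> x) ` B)"

definition dual_ball :: "'a::euclidean_space set \<Rightarrow> 'a set" where
  "dual_ball B = {p. dual_gauge B p \<le> 1}"

definition skewness :: "'a::euclidean_space set \<Rightarrow> real" where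
  "skewness B = Sup {gauge B x / gauge B (-x) | x. x \<noteq> 0}"

text \<open>Weighted sets: a finite set with a weight function (positive on the set).
  Sum of weighted sets: union, weights added at common points.\<close>
definition wsum_weight :: "'a set \<Rightarrow> ('a \<Rightarrow> real) \<Rightarrow> 'a set \<Rightarrow> ('a \<Rightarrow> real) \<Rightarrow> 'a \<Rightarrow> real" where
  "wsum_weight D w C v = (\<lambda>s. (if s \<in> D then w s else 0) + (if s \<in> C then v s else 0))"

definition FW :: "'a::euclidean_space set \<Rightarrow> 'a set \<Rightarrow> ('a \<Rightarrow> real) \<Rightarrow> 'a set" where
  "FW B S u = {x. \<forall>y. (\<Sum>s\<in>S. u s * gauge B (x - s)) \<le> (\<Sum>s\<in>S. u s * gauge B (y - s))}"

definition CL :: "'a::euclidean_space set \<Rightarrow> 'a set \<Rightarrow> ('a \<Rightarrow> real) \<Rightarrow> 'a set" where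
  "CL B D w = \<Union> {FW B (D \<union> C) (wsum_weight D w C v) | C v.
       finite C \<and> C \<noteq> {} \<and> (\<forall>c\<in>C. 0 < v c) \<and> skewness B * sum v C < sum w D}"

definition Fface :: "'a::euclidean_space set \<Rightarrow> 'a \<Rightarrow> 'a set" where
  "Fface B p = {x \<in> B. p \<bullet> x = 1}"

definition Ncone :: "'a::euclidean_space set \<Rightarrow> 'a \<Rightarrow> 'a set" where
  "Ncone B p = (if dual_gauge B p = 1 then {c *\<^sub>R x | c x. 0 \<le> c \<and> x \<in> Fface B p} else {0})"

definition Cpi :: "'a::euclidean_space set \<Rightarrow> 'a set \<Rightarrow> ('a \<Rightarrow> 'a) \<Rightarrow> 'a set" where
  "Cpi B S \<pi> = (\<Inter>s\<in>S. (\<lambda>y. s + y) ` Ncone B (\<pi> s))"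

definition elementary_convex :: "'a::euclidean_space set \<Rightarrow> 'a set \<Rightarrow> 'a set \<Rightarrow> bool" where
  "elementary_convex B S E \<longleftrightarrow>
     (\<exists>\<pi>. (\<forall>s\<in>S. \<pi> s \<in> dual_ball B) \<and> E = Cpi B S \<pi> \<and> E \<noteq> {})"

definition EH :: "'a::euclidean_space set \<Rightarrow> 'a set \<Rightarrow> 'a set" where
  "EH B S = \<Union> {E. elementary_convex B S E \<and> bounded E}"

end

theory Submission
  imports Defs
begin

text \<open>
  A point y lies in CL exactly when it admits subgradients p_s \<in> \<partial>\<gamma>(y - s) whose weighted
  resultant g = \<Sum> w_s p_s satisfies \<sigma> \<gamma>\<degree>(-g) < w_D: contaminating y itself with mass \<gamma>\<degree>(-g)
  cancels g, and conversely the optimality condition for the contaminated problem writes -g as a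
  combination of dual-ball vectors with total mass v_C. Such a certificate p works for every point
  of the elementary convex set C_p, and coercivity of \<Sum> w_s \<gamma>(x - s) - \<langle>g, x\<rangle>, which comes from
  \<sigma> \<gamma>\<degree>(-g) < w_D, makes C_p bounded. For connectedness, the minimizers of
  \<Sum> w_s \<gamma>(x - s) - t \<langle>g, x\<rangle>, 0 \<le> t \<le> 1, form an upper semicontinuous family of nonempty convex
  sets inside CL running from FW (t = 0) to a set containing y (t = 1).
\<close>

text \<open>For a gauge, \<partial>\<gamma>(y) = {p \<in> B\<degree>. \<langle>p, y\<rangle> = \<gamma>(y)}; so p s is a subgradient of \<gamma> at x - s.\<close>

definition subgradient_family :: "'a::euclidean_space set \<Rightarrow> 'a set \<Rightarrow> 'a \<Rightarrow> ('a \<Rightarrow> 'a) \<Rightarrow> bool" where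
  "subgradient_family B S x p \<longleftrightarrow> (\<forall>s\<in>S. p s \<in> dual_ball B \<and> p s \<bullet> (x - s) = gauge B (x - s))"

abbreviation fw_cost :: "'a::euclidean_space set \<Rightarrow> 'a set \<Rightarrow> ('a \<Rightarrow> real) \<Rightarrow> 'a \<Rightarrow> real" where
  "fw_cost B S u x \<equiv> \<Sum>s\<in>S. u s * gauge B (x - s)"

definition tilted_FW :: "'a::euclidean_space set \<Rightarrow> 'a set \<Rightarrow> ('a \<Rightarrow> real) \<Rightarrow> 'a \<Rightarrow> 'a set" where
  "tilted_FW B S u h = {x. \<forall>y. fw_cost B S u x - h \<bullet> x \<le> fw_cost B S u y - h \<bullet> y}"

text \<open>The resultant g of the data forces can be cancelled by a contamination of mass v with
  \<sigma> v < w_D.\<close>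

definition balanceable :: "'a::euclidean_space set \<Rightarrow> 'a set \<Rightarrow> ('a \<Rightarrow> real) \<Rightarrow> 'a \<Rightarrow> bool" where
  "balanceable B D w g \<longleftrightarrow> skewness B * dual_gauge B (- g) < sum w D"

lemma FW_eq_tilted_FW_0: "FW B S u = tilted_FW B S u 0"
  by (simp add: FW_def tilted_FW_def)

lemma real_eq_if_same_positive_upper_bounds:
  fixes a b :: real
  assumes "0 \<le> a" "0 \<le> b" "\<And>t. 0 < t \<Longrightarrow> a \<le> t \<longleftrightarrow> b \<le> t"
  shows "a = b"
  using assms(3)[of "(a + b) / 2"] assms(1,2) by (cases a b rule: linorder_cases) auto

lemma finite_family_convergent_subseq:
  fixes X :: "nat \<Rightarrow> 'b \<Rightarrow> 'a::metric_space"
  assumes "finite S" "compact K" "\<forall>n. \<forall>s\<in>S. X n s \<in> K"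
  obtains r l where "strict_mono r" "\<forall>s\<in>S. l s \<in> K \<and> (\<lambda>n. X (r n) s) \<longlonglongrightarrow> l s"
proof -
  have "\<exists>r l. strict_mono r \<and> (\<forall>s\<in>S. l s \<in> K \<and> (\<lambda>n. X (r n) s) \<longlonglongrightarrow> l s)"
    using assms(1,3)
  proof (induction S rule: finite_induct)
    case empty
    show ?case by (rule exI[of _ id]) (auto simp: strict_mono_def)
  next
    case (insert a S)
    then obtain r l where rl: "strict_mono r" "\<forall>s\<in>S. l s \<in> K \<and> (\<lambda>n. X (r n) s) \<longlonglongrightarrow> l s"
      by auto
    have "\<forall>n. X (r n) a \<in> K" using insert.prems by auto
    then obtain la r' where r': "la \<in> K" "strict_mono r'" "((\<lambda>n. X (r n) a) \<circ> r') \<longlonglongrightarrow> la"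
      using seq_compactE[OF compact_imp_seq_compact[OF assms(2)]] by metis
    have "(\<lambda>n. X ((r \<circ> r') n) s) \<longlonglongrightarrow> l s" if "s \<in> S" for s
      using LIMSEQ_subseq_LIMSEQ[OF _ r'(2), of "\<lambda>n. X (r n) s"] rl(2) that by (simp add: comp_def)
    then have "\<forall>s\<in>insert a S. (l(a := la)) s \<in> K \<and> (\<lambda>n. X ((r \<circ> r') n) s) \<longlonglongrightarrow> (l(a := la)) s"
      using rl r' by (auto simp: comp_def)
    moreover have "strict_mono (r \<circ> r')" using rl r' strict_mono_o by blast
    ultimately show ?case by blast
  qed
  then show ?thesis using that by blast
qed

lemma convex_minimizers:
  assumes "convex_on UNIV f"
  shows "convex {x. \<forall>y. f x \<le> f y}"
proof (rule convexI)
  fix x1 x2 and a b :: real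
  assume x: "x1 \<in> {x. \<forall>y. f x \<le> f y}" "x2 \<in> {x. \<forall>y. f x \<le> f y}" and ab: "0 \<le> a" "0 \<le> b" "a + b = 1"
  have "f (a *\<^sub>R x1 + b *\<^sub>R x2) \<le> a * f x1 + b * f x2"
    using assms ab unfolding convex_on_def by blast
  moreover have "a * f x1 + b * f x2 \<le> a * f y + b * f y" for y
    using x ab by (intro add_mono mult_left_mono) auto
  ultimately show "a *\<^sub>R x1 + b *\<^sub>R x2 \<in> {x. \<forall>y. f x \<le> f y}"
    using ab by (simp flip: distrib_right) (meson order_trans)
qed

lemma exists_minimizer_if_sublevel_compact:
  fixes f :: "'a::topological_space \<Rightarrow> real"
  assumes "continuous_on UNIV f" "compact K" "\<And>z. f z \<le> f a \<Longrightarrow> z \<in> K"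
  shows "\<exists>x. \<forall>y. f x \<le> f y"
proof -
  have "continuous_on K f" using assms(1) continuous_on_subset by blast
  then obtain x where x: "x \<in> K" "\<forall>y\<in>K. f x \<le> f y"
    using continuous_attains_inf[OF assms(2)] assms(3)[of a] by blast
  have "f x \<le> f y" for y
    using x assms(3)[of y] x(2)[rule_format, of a] assms(3)[of a] by fastforce
  then show ?thesis by blast
qed

lemma sum_wsum_weight:
  fixes \<phi> :: "'a \<Rightarrow> 'b::real_vector"
  assumes "finite D" "finite C"
  shows "(\<Sum>s\<in>D \<union> C. wsum_weight D w C v s *\<^sub>R \<phi> s) = (\<Sum>s\<in>D. w s *\<^sub>R \<phi> s) + (\<Sum>s\<in>C. v s *\<^sub>R \<phi> s)"
proof -
  have "(\<Sum>s\<in>D \<union> C. wsum_weight D w C v s *\<^sub>R \<phi> s)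
      = (\<Sum>s\<in>D \<union> C. if s \<in> D then w s *\<^sub>R \<phi> s else 0) + (\<Sum>s\<in>D \<union> C. if s \<in> C then v s *\<^sub>R \<phi> s else 0)"
    unfolding wsum_weight_def sum.distrib[symmetric] by (intro sum.cong) (auto simp: scaleR_add_left)
  also have "\<dots> = (\<Sum>s\<in>D. w s *\<^sub>R \<phi> s) + (\<Sum>s\<in>C. v s *\<^sub>R \<phi> s)"
    using assms by (simp flip: sum.inter_restrict add: Int_absorb2)
  finally show ?thesis .
qed

lemma sum_wsum_weight_real:
  assumes "finite D" "finite C"
  shows "(\<Sum>s\<in>D \<union> C. wsum_weight D w C v s * \<phi> s) = (\<Sum>s\<in>D. w s * \<phi> s) + (\<Sum>s\<in>C. v s * \<phi> s)"
  using sum_wsum_weight[OF assms, of w v \<phi>] by simp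

lemma closed_parameters_of_fibres_inside:
  fixes A :: "'b::metric_space \<Rightarrow> 'a::metric_space set"
  assumes "compact K" "closed (SIGMA t:T. A t)"
    and nonempty: "\<And>t. t \<in> T \<Longrightarrow> A t \<noteq> {}" and bounded: "\<And>t. t \<in> T \<Longrightarrow> A t \<subseteq> K"
    and "open e'" and disjoint: "e' \<inter> e \<inter> (\<Union>t\<in>T. A t) = {}"
    and dichotomy: "\<And>t. t \<in> T \<Longrightarrow> A t \<subseteq> e \<or> A t \<subseteq> e'"
  shows "closed {t \<in> T. A t \<subseteq> e}"
  unfolding closed_sequential_limits
proof (intro allI impI)
  fix tn t assume tn: "(\<forall>n. tn n \<in> {t \<in> T. A t \<subseteq> e}) \<and> tn \<longlonglongrightarrow> t"
  have "\<forall>n. \<exists>z. z \<in> A (tn n)" using nonempty tn by blast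
  then obtain zn where zn: "\<And>n. zn n \<in> A (tn n)" by metis
  have "\<forall>n. zn n \<in> K" using zn bounded tn by blast
  then obtain z r where r: "strict_mono r" "(zn \<circ> r) \<longlonglongrightarrow> z"
    using seq_compactE[OF compact_imp_seq_compact[OF \<open>compact K\<close>]] by metis
  have "(tn \<circ> r) \<longlonglongrightarrow> t" using LIMSEQ_subseq_LIMSEQ tn r(1) by blast
  then have lim: "(\<lambda>n. (tn (r n), zn (r n))) \<longlonglongrightarrow> (t, z)"
    using tendsto_Pair[OF _ r(2)] by (simp add: comp_def)
  have mem: "(tn (r n), zn (r n)) \<in> (SIGMA t:T. A t)" for n using zn tn by blast
  have "(t, z) \<in> (SIGMA t:T. A t)"
    by (rule closed_sequentially[OF \<open>closed (SIGMA t:T. A t)\<close> mem lim])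
  then have t: "t \<in> T" and z: "z \<in> A t" by auto
  show "t \<in> {t \<in> T. A t \<subseteq> e}"
  proof (rule ccontr)
    assume "t \<notin> {t \<in> T. A t \<subseteq> e}"
    then have "A t \<subseteq> e'" using dichotomy[OF t] t by auto
    then have "z \<in> e'" using z by auto
    then obtain N where N: "zn (r N) \<in> e'"
      using topological_tendstoD[OF r(2) \<open>open e'\<close>] unfolding eventually_sequentially by auto
    have "tn (r N) \<in> T" "A (tn (r N)) \<subseteq> e" using tn by auto
    then have "zn (r N) \<in> e' \<inter> e \<inter> (\<Union>t\<in>T. A t)" using N zn[of "r N"] by auto
    then show False using disjoint by simp
  qed
qed

text \<open>The parameters whose fibre lies in e1, resp. e2, form two disjoint closed sets covering T.\<close>

lemma connected_UN_if_closed_graph: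
  fixes A :: "'b::metric_space \<Rightarrow> 'a::metric_space set"
  assumes "connected T" "compact K" "closed (SIGMA t:T. A t)"
    and nonempty: "\<And>t. t \<in> T \<Longrightarrow> A t \<noteq> {}" and connected: "\<And>t. t \<in> T \<Longrightarrow> connected (A t)"
    and bounded: "\<And>t. t \<in> T \<Longrightarrow> A t \<subseteq> K"
  shows "connected (\<Union>t\<in>T. A t)"
proof (rule connectedI)
  let ?U = "\<Union>t\<in>T. A t"
  fix e1 e2 assume e: "open e1" "open e2" "e1 \<inter> ?U \<noteq> {}" "e2 \<inter> ?U \<noteq> {}" "e1 \<inter> e2 \<inter> ?U = {}"
    "?U \<subseteq> e1 \<union> e2"
  have dichotomy: "A t \<subseteq> e1 \<or> A t \<subseteq> e2" if "t \<in> T" for t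
    using connectedD[OF connected[OF that] e(1,2)] e(5,6) that by blast
  let ?T1 = "{t \<in> T. A t \<subseteq> e1}" and ?T2 = "{t \<in> T. A t \<subseteq> e2}"
  have "e2 \<inter> e1 \<inter> ?U = {}" using e(5) by blast
  then have closed1: "closed ?T1"
    using closed_parameters_of_fibres_inside[OF assms(2,3) nonempty bounded e(2)] dichotomy by blast
  have closed2: "closed ?T2"
    using closed_parameters_of_fibres_inside[OF assms(2,3) nonempty bounded e(1) e(5)] dichotomy by blast
  have cover: "T = ?T1 \<union> ?T2" using dichotomy by blast
  have nonempty1: "?T1 \<noteq> {}"
  proof -
    obtain t z where "t \<in> T" "z \<in> A t" "z \<in> e1" using e(3) by blast
    then show ?thesis using dichotomy e(5) by blast
  qed
  have nonempty2: "?T2 \<noteq> {}"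
  proof -
    obtain t z where "t \<in> T" "z \<in> A t" "z \<in> e2" using e(4) by blast
    then show ?thesis using dichotomy e(5) by blast
  qed
  have "?T1 \<inter> ?T2 \<noteq> {}"
    by (rule connected_as_closed_union[OF \<open>connected T\<close> cover closed1 closed2 nonempty1 nonempty2])
  then obtain t where "t \<in> T" "A t \<subseteq> e1" "A t \<subseteq> e2" by blast
  then show False using nonempty e(5) by blast
qed

locale gauge_unit_ball =
  fixes B :: "'a::euclidean_space set"
  assumes gauge_ball: "gauge_ball B"
begin

lemma convex_B: "convex B" and compact_B: "compact B" and zero_in_interior_B: "0 \<in> interior B"
  using gauge_ball by (auto simp: gauge_ball_def)

lemma closed_B: "closed B"
  using compact_B compact_imp_closed by blast

lemma zero_in_B: "0 \<in> B"
  using zero_in_interior_B interior_subset by blast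

lemma obtain_cball_subset_B:
  obtains r where "r > 0" "cball 0 r \<subseteq> B"
  using zero_in_interior_B mem_interior_cball by blast

lemma obtain_norm_bound_B:
  obtains R where "R > 0" "\<And>x. x \<in> B \<Longrightarrow> norm x \<le> R"
  using compact_B compact_imp_bounded bounded_pos by metis

subsection \<open>The gauge\<close>

lemma mem_scaled_B_iff: "0 < t \<Longrightarrow> x \<in> (\<lambda>y. t *\<^sub>R y) ` B \<longleftrightarrow> inverse t *\<^sub>R x \<in> B"
  by (auto simp: image_iff intro!: bexI[of _ "inverse t *\<^sub>R x"])

lemma inverse_scaleR_in_B_mono:
  assumes "0 < t" "t \<le> t'" "inverse t *\<^sub>R x \<in> B"
  shows "inverse t' *\<^sub>R x \<in> B"
proof -
  have "(t / t') *\<^sub>R (inverse t *\<^sub>R x) + (1 - t / t') *\<^sub>R 0 \<in> B"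
    using assms by (intro convexD[OF convex_B assms(3) zero_in_B]) auto
  moreover have "(t / t') *\<^sub>R (inverse t *\<^sub>R x) + (1 - t / t') *\<^sub>R 0 = inverse t' *\<^sub>R x"
    using assms by (simp add: field_simps)
  ultimately show ?thesis by metis
qed

lemma gauge_scalings_nonempty: "{t. 0 < t \<and> x \<in> (\<lambda>y. t *\<^sub>R y) ` B} \<noteq> {}"
proof -
  obtain r where r: "r > 0" "cball 0 r \<subseteq> B" by (rule obtain_cball_subset_B)
  define t where "t = norm x / r + 1"
  have t: "0 < t" "norm x \<le> r * t"
    using r by (auto simp: t_def field_simps add_pos_nonneg)
  then have "inverse t *\<^sub>R x \<in> B"
    using r by (auto simp: field_simps)
  then show ?thesis using t mem_scaled_B_iff by blast
qed

lemma gauge_le_iff: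
  assumes "0 < t"
  shows "gauge B x \<le> t \<longleftrightarrow> inverse t *\<^sub>R x \<in> B"
proof -
  let ?T = "{t. 0 < t \<and> x \<in> (\<lambda>y. t *\<^sub>R y) ` B}"
  have bdd: "bdd_below ?T" by (rule bdd_belowI[of _ 0]) auto
  show ?thesis
  proof
    assume "inverse t *\<^sub>R x \<in> B"
    then have "t \<in> ?T" using assms mem_scaled_B_iff by blast
    then show "gauge B x \<le> t" unfolding gauge_def using bdd by (rule cInf_lower)
  next
    assume le: "gauge B x \<le> t"
    have approx: "inverse (t + e) *\<^sub>R x \<in> B" if "e > 0" for e
    proof -
      have "Inf ?T < t + e" using le that unfolding gauge_def by linarith
      then obtain t' where "t' \<in> ?T" "t' < t + e"
        using cInf_less_iff[OF gauge_scalings_nonempty bdd] by blast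
      then show ?thesis using inverse_scaleR_in_B_mono[of t' "t + e" x] mem_scaled_B_iff by auto
    qed
    have "(\<lambda>n. inverse (t + inverse (real (Suc n))) *\<^sub>R x) \<longlonglongrightarrow> inverse (t + 0) *\<^sub>R x"
      by (intro tendsto_intros LIMSEQ_inverse_real_of_nat) (use assms in auto)
    then have lim: "(\<lambda>n. inverse (t + inverse (real (Suc n))) *\<^sub>R x) \<longlonglongrightarrow> inverse t *\<^sub>R x"
      by simp
    have "inverse (t + inverse (real (Suc n))) *\<^sub>R x \<in> B" for n
      by (rule approx) simp
    then show "inverse t *\<^sub>R x \<in> B" by (rule closed_sequentially[OF closed_B _ lim])
  qed
qed

lemma gauge_nonneg: "0 \<le> gauge B x"
  unfolding gauge_def by (rule cInf_greatest[OF gauge_scalings_nonempty]) auto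

lemma gauge_le_1_iff: "gauge B x \<le> 1 \<longleftrightarrow> x \<in> B"
  using gauge_le_iff[of 1 x] by simp

lemma gauge_zero [simp]: "gauge B 0 = 0"
proof -
  have "gauge B 0 \<le> 0 + e" if "e > 0" for e
    using gauge_le_iff[of e 0] that zero_in_B by simp
  then show ?thesis using gauge_nonneg[of 0] field_le_epsilon by (metis order_antisym)
qed

lemma gauge_scaleR:
  assumes "0 \<le> c"
  shows "gauge B (c *\<^sub>R x) = c * gauge B x"
proof (cases "c = 0")
  case False
  then have c: "c > 0" using assms by simp
  show ?thesis
  proof (rule real_eq_if_same_positive_upper_bounds)
    fix t :: real assume t: "0 < t"
    have "gauge B (c *\<^sub>R x) \<le> t \<longleftrightarrow> inverse t *\<^sub>R (c *\<^sub>R x) \<in> B" using gauge_le_iff t by blast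
    also have "\<dots> \<longleftrightarrow> inverse (t / c) *\<^sub>R x \<in> B" using c by (simp add: field_simps)
    also have "\<dots> \<longleftrightarrow> gauge B x \<le> t / c" using gauge_le_iff c t by simp
    also have "\<dots> \<longleftrightarrow> c * gauge B x \<le> t" using c by (simp add: field_simps)
    finally show "gauge B (c *\<^sub>R x) \<le> t \<longleftrightarrow> c * gauge B x \<le> t" .
  qed (use c gauge_nonneg in auto)
qed simp

lemma gauge_triangle: "gauge B (x + y) \<le> gauge B x + gauge B y"
proof (rule field_le_epsilon)
  fix e :: real assume e: "e > 0"
  define a where "a = gauge B x + e / 2"
  define b where "b = gauge B y + e / 2"
  have ab: "a > 0" "b > 0" using e gauge_nonneg[of x] gauge_nonneg[of y] by (auto simp: a_def b_def)
  have xa: "inverse a *\<^sub>R x \<in> B" using gauge_le_iff[of a x] ab e by (simp add: a_def)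
  have yb: "inverse b *\<^sub>R y \<in> B" using gauge_le_iff[of b y] ab e by (simp add: b_def)
  have "(a / (a + b)) *\<^sub>R (inverse a *\<^sub>R x) + (b / (a + b)) *\<^sub>R (inverse b *\<^sub>R y) \<in> B"
    by (rule convexD[OF convex_B xa yb]) (use ab in \<open>simp_all add: add_divide_distrib[symmetric]\<close>)
  moreover have "(a / (a + b)) *\<^sub>R (inverse a *\<^sub>R x) + (b / (a + b)) *\<^sub>R (inverse b *\<^sub>R y)
      = inverse (a + b) *\<^sub>R (x + y)"
    using ab by (simp add: field_simps scaleR_add_right)
  ultimately have "gauge B (x + y) \<le> a + b" using gauge_le_iff ab by simp
  then show "gauge B (x + y) \<le> gauge B x + gauge B y + e" unfolding a_def b_def by simp
qed

lemma convex_on_gauge: "convex_on UNIV (gauge B)"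
proof (rule convex_onI)
  fix t :: real and x y :: 'a assume "0 < t" "t < 1"
  then show "gauge B ((1 - t) *\<^sub>R x + t *\<^sub>R y) \<le> (1 - t) * gauge B x + t * gauge B y"
    using gauge_triangle[of "(1 - t) *\<^sub>R x" "t *\<^sub>R y"] gauge_scaleR[of "1 - t" x] gauge_scaleR[of t y]
    by simp
qed simp

lemma gauge_le_norm_divide:
  assumes "r > 0" "cball 0 r \<subseteq> B"
  shows "gauge B x \<le> norm x / r"
proof (cases "x = 0")
  case False
  then have "inverse (norm x / r) *\<^sub>R x \<in> B" using assms by auto
  then show ?thesis using gauge_le_iff[of "norm x / r"] False assms by simp
qed simp

lemma norm_le_mult_gauge:
  assumes "R > 0" "\<And>x. x \<in> B \<Longrightarrow> norm x \<le> R"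
  shows "norm x \<le> R * gauge B x"
proof (rule field_le_epsilon)
  fix e :: real assume e: "e > 0"
  define t where "t = gauge B x + e / R"
  have t: "t > 0" using gauge_nonneg[of x] e assms unfolding t_def by (simp add: add_nonneg_pos)
  have "gauge B x \<le> t" using e assms by (simp add: t_def)
  then have "inverse t *\<^sub>R x \<in> B" using gauge_le_iff[OF t] by simp
  then have "norm x \<le> R * t" using assms(2) t by (fastforce simp: field_simps)
  moreover have "R * t = R * gauge B x + e" using assms by (simp add: t_def field_simps)
  ultimately show "norm x \<le> R * gauge B x + e" by simp
qed

lemma gauge_pos: "x \<noteq> 0 \<Longrightarrow> 0 < gauge B x"
proof -
  assume "x \<noteq> 0"
  obtain R where R: "R > 0" "\<And>x. x \<in> B \<Longrightarrow> norm x \<le> R"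
    using obtain_norm_bound_B by metis
  have "0 < R * gauge B x"
    using norm_le_mult_gauge[OF R, of x] \<open>x \<noteq> 0\<close> by (metis less_le_trans zero_less_norm_iff)
  then show ?thesis using R(1) by (simp add: zero_less_mult_iff)
qed

lemma gauge_normalized_in_B: "x \<noteq> 0 \<Longrightarrow> inverse (gauge B x) *\<^sub>R x \<in> B"
  using gauge_le_iff[OF gauge_pos] by blast

lemma continuous_on_gauge: "continuous_on UNIV (gauge B)"
proof -
  obtain r where r: "r > 0" "cball 0 r \<subseteq> B" by (rule obtain_cball_subset_B)
  have "\<bar>gauge B x - gauge B y\<bar> \<le> norm (x - y) / r" for x y
    using gauge_triangle[of y "x - y"] gauge_triangle[of x "y - x"]
      gauge_le_norm_divide[OF r, of "x - y"] gauge_le_norm_divide[OF r, of "y - x"]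
    by (simp add: norm_minus_commute)
  then have "lipschitz_on (1 / r) UNIV (gauge B)"
    by (intro lipschitz_onI) (auto simp: dist_real_def dist_norm field_simps r(1) less_imp_le)
  then show ?thesis by (rule lipschitz_on_continuous_on)
qed

lemma tendsto_gauge [tendsto_intros]: "(f \<longlongrightarrow> l) F \<Longrightarrow> ((\<lambda>n. gauge B (f n)) \<longlongrightarrow> gauge B l) F"
  using continuous_on_tendsto_compose[OF continuous_on_gauge] by auto

subsection \<open>The dual gauge\<close>

lemma bdd_above_inner_B: "bdd_above ((\<lambda>x. p \<bullet> x) ` B)"
proof -
  obtain R where R: "R > 0" "\<And>x. x \<in> B \<Longrightarrow> norm x \<le> R"
    using obtain_norm_bound_B by metis
  have "p \<bullet> x \<le> norm p * R" if "x \<in> B" for x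
    using norm_cauchy_schwarz[of p x] R(2)[OF that] mult_left_mono[of "norm x" R "norm p"] by simp
  then show ?thesis by (intro bdd_aboveI2)
qed

lemma inner_le_dual_gauge: "x \<in> B \<Longrightarrow> p \<bullet> x \<le> dual_gauge B p"
  unfolding dual_gauge_def by (rule cSup_upper) (use bdd_above_inner_B in auto)

lemma dual_gauge_le_iff: "dual_gauge B p \<le> c \<longleftrightarrow> (\<forall>x\<in>B. p \<bullet> x \<le> c)"
  unfolding dual_gauge_def using zero_in_B by (subst cSup_le_iff) (auto simp: bdd_above_inner_B)

lemma dual_gauge_nonneg: "0 \<le> dual_gauge B p"
  using inner_le_dual_gauge[OF zero_in_B, of p] by simp

lemma dual_gauge_zero [simp]: "dual_gauge B 0 = 0"
  using dual_gauge_nonneg[of 0] dual_gauge_le_iff[of 0 0] by simp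

lemma inner_le_dual_gauge_mult_gauge: "p \<bullet> y \<le> dual_gauge B p * gauge B y"
proof (cases "y = 0")
  case False
  have "inverse (gauge B y) * (p \<bullet> y) \<le> dual_gauge B p"
    using inner_le_dual_gauge[OF gauge_normalized_in_B[OF False], of p] by simp
  then show ?thesis using gauge_pos[OF False] by (simp add: field_simps mult.commute)
qed simp

lemma inner_le_gauge_if_dual_ball: "p \<in> dual_ball B \<Longrightarrow> p \<bullet> y \<le> gauge B y"
  using inner_le_dual_gauge_mult_gauge[of p y] gauge_nonneg[of y]
    mult_right_mono[of "dual_gauge B p" 1 "gauge B y"]
  unfolding dual_ball_def by auto

lemma dual_gauge_attained: "\<exists>x\<in>B. p \<bullet> x = dual_gauge B p"
proof -
  have "continuous_on B (\<lambda>x. p \<bullet> x)" by (intro continuous_intros)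
  then obtain x where "x \<in> B" "\<forall>y\<in>B. p \<bullet> y \<le> p \<bullet> x"
    using continuous_attains_sup[OF compact_B] zero_in_B by blast
  then show ?thesis using dual_gauge_le_iff[of p "p \<bullet> x"] inner_le_dual_gauge[of x p] by force
qed

lemma norm_le_dual_gauge:
  assumes "r > 0" "cball 0 r \<subseteq> B"
  shows "r * norm p \<le> dual_gauge B p"
proof (cases "p = 0")
  case False
  have "(r / norm p) *\<^sub>R p \<in> B" using assms False by auto
  then have "p \<bullet> ((r / norm p) *\<^sub>R p) \<le> dual_gauge B p" by (rule inner_le_dual_gauge)
  moreover have "p \<bullet> ((r / norm p) *\<^sub>R p) = r * norm p"
    using False by (simp add: power2_norm_eq_inner[symmetric] power2_eq_square)
  ultimately show ?thesis by simp
qed simp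

lemma dual_gauge_scaleR_le: "0 \<le> c \<Longrightarrow> dual_gauge B (c *\<^sub>R q) \<le> c * dual_gauge B q"
  unfolding dual_gauge_le_iff using inner_le_dual_gauge mult_left_mono by fastforce

lemma dual_gauge_sum_le:
  assumes "\<And>c. c \<in> C \<Longrightarrow> q c \<in> dual_ball B" "\<And>c. c \<in> C \<Longrightarrow> 0 \<le> v c"
  shows "dual_gauge B (\<Sum>c\<in>C. v c *\<^sub>R q c) \<le> sum v C"
  unfolding dual_gauge_le_iff
proof
  fix x assume x: "x \<in> B"
  have "(\<Sum>c\<in>C. v c *\<^sub>R q c) \<bullet> x = (\<Sum>c\<in>C. v c * (q c \<bullet> x))" by (simp add: inner_sum_left)
  also have "\<dots> \<le> (\<Sum>c\<in>C. v c * 1)"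
  proof (rule sum_mono)
    fix c assume "c \<in> C"
    then have "q c \<bullet> x \<le> 1"
      using assms(1) inner_le_dual_gauge[OF x, of "q c"] unfolding dual_ball_def by fastforce
    then show "v c * (q c \<bullet> x) \<le> v c * 1" using assms(2)[OF \<open>c \<in> C\<close>] by (rule mult_left_mono)
  qed
  finally show "(\<Sum>c\<in>C. v c *\<^sub>R q c) \<bullet> x \<le> sum v C" by simp
qed

lemma dual_ball_eq_Inter: "dual_ball B = (\<Inter>x\<in>B. {p. x \<bullet> p \<le> 1})"
  unfolding dual_ball_def using dual_gauge_le_iff by (auto simp: inner_commute)

lemma convex_dual_ball: "convex (dual_ball B)"
  unfolding dual_ball_eq_Inter by (auto intro: convex_INT convex_halfspace_le)

lemma compact_dual_ball: "compact (dual_ball B)"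
proof -
  obtain r where r: "r > 0" "cball 0 r \<subseteq> B" by (rule obtain_cball_subset_B)
  have "norm p \<le> 1 / r" if "p \<in> dual_ball B" for p
    using norm_le_dual_gauge[OF r, of p] that r unfolding dual_ball_def by (simp add: field_simps)
  then have "bounded (dual_ball B)" unfolding bounded_iff by blast
  moreover have "closed (dual_ball B)"
    unfolding dual_ball_eq_Inter by (auto intro: closed_INT closed_halfspace_le)
  ultimately show ?thesis by (simp add: compact_eq_bounded_closed)
qed

lemma gauge_1_not_interior:
  assumes "gauge B z = 1"
  shows "z \<notin> interior B"
proof
  assume "z \<in> interior B"
  then obtain e where e: "e > 0" "cball z e \<subseteq> B" using mem_interior_cball by blast
  have z: "z \<noteq> 0" using assms by auto
  have "dist z ((1 + e / norm z) *\<^sub>R z) = e"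
    using e z by (simp add: dist_norm algebra_simps)
  then have "gauge B ((1 + e / norm z) *\<^sub>R z) \<le> 1" using e gauge_le_1_iff by auto
  moreover have "gauge B ((1 + e / norm z) *\<^sub>R z) = 1 + e / norm z"
    using gauge_scaleR[of "1 + e / norm z" z] assms e by (simp add: add_nonneg_nonneg)
  moreover have "0 < e / norm z" using e z by simp
  ultimately show False by simp
qed

text \<open>A supporting hyperplane of B at the boundary point y / \<gamma>(y) yields the subgradient.\<close>

lemma subgradient_exists: "\<exists>p\<in>dual_ball B. p \<bullet> y = gauge B y"
proof (cases "y = 0")
  case True
  have "(0::'a) \<in> dual_ball B" unfolding dual_ball_def by simp
  then show ?thesis using True by force
next
  case False
  define z where "z = inverse (gauge B y) *\<^sub>R y"
  have zB: "z \<in> B" unfolding z_def by (rule gauge_normalized_in_B[OF False])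
  have "gauge B z = 1"
    using gauge_scaleR[of "inverse (gauge B y)" y] gauge_pos[OF False] by (simp add: z_def)
  then have "z \<notin> rel_interior B"
    using gauge_1_not_interior zero_in_interior_B rel_interior_nonempty_interior by blast
  then obtain a where a: "a \<noteq> 0" "\<And>x. x \<in> B \<Longrightarrow> a \<bullet> z \<le> a \<bullet> x"
    using supporting_hyperplane_relative_frontier[OF convex_B] zB closed_B closure_closed by metis
  obtain r where r: "r > 0" "cball 0 r \<subseteq> B" by (rule obtain_cball_subset_B)
  have "0 < r * norm (- a)" using a(1) r(1) by simp
  also have "\<dots> \<le> dual_gauge B (- a)" by (rule norm_le_dual_gauge[OF r])
  also have "\<dots> \<le> - a \<bullet> z" using a(2) by (simp add: dual_gauge_le_iff)
  finally have az: "- a \<bullet> z > 0" .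
  define p where "p = inverse (- a \<bullet> z) *\<^sub>R (- a)"
  have "\<forall>x\<in>B. p \<bullet> x \<le> 1" using a(2) az by (auto simp: p_def field_simps)
  then have "p \<in> dual_ball B" unfolding dual_ball_def using dual_gauge_le_iff by simp
  moreover have "p \<bullet> z = 1" using az by (simp add: p_def)
  then have "p \<bullet> y = gauge B y" using gauge_pos[OF False] by (simp add: z_def field_simps)
  ultimately show ?thesis by blast
qed

subsection \<open>Normal cones and elementary convex sets\<close>

lemma mem_Ncone_iff:
  assumes "p \<in> dual_ball B"
  shows "y \<in> Ncone B p \<longleftrightarrow> p \<bullet> y = gauge B y"
proof
  assume y: "y \<in> Ncone B p"
  show "p \<bullet> y = gauge B y"
  proof (cases "dual_gauge B p = 1")
    case True
    then obtain c x where cx: "y = c *\<^sub>R x" "0 \<le> c" "x \<in> B" "p \<bullet> x = 1"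
      using y unfolding Ncone_def Fface_def by auto
    have "gauge B x = 1"
      using cx gauge_le_1_iff[of x] inner_le_gauge_if_dual_ball[OF assms, of x] by simp
    then show ?thesis using cx gauge_scaleR by simp
  qed (use y in \<open>simp add: Ncone_def\<close>)
next
  assume h: "p \<bullet> y = gauge B y"
  show "y \<in> Ncone B p"
  proof (cases "y = 0")
    case True
    show ?thesis
    proof (cases "dual_gauge B p = 1")
      case dual_1: True
      obtain x where "x \<in> B" "p \<bullet> x = dual_gauge B p" using dual_gauge_attained by blast
      then have "x \<in> Fface B p" using dual_1 by (simp add: Fface_def)
      then have "(0::real) *\<^sub>R x \<in> {c *\<^sub>R x |c x. 0 \<le> c \<and> x \<in> Fface B p}" by blast
      then show ?thesis using True dual_1 unfolding Ncone_def by simp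
    qed (simp add: Ncone_def True)
  next
    case False
    define z where "z = inverse (gauge B y) *\<^sub>R y"
    have zB: "z \<in> B" unfolding z_def by (rule gauge_normalized_in_B[OF False])
    have pz: "p \<bullet> z = 1" using h gauge_pos[OF False] unfolding z_def by simp
    have "dual_gauge B p = 1"
      using inner_le_dual_gauge[OF zB, of p] pz assms unfolding dual_ball_def by simp
    moreover have "y = gauge B y *\<^sub>R z" using gauge_pos[OF False] unfolding z_def by simp
    then have "y \<in> {c *\<^sub>R x |c x. 0 \<le> c \<and> x \<in> Fface B p}"
      using zB pz gauge_nonneg[of y] unfolding Fface_def by blast
    ultimately show ?thesis unfolding Ncone_def by simp
  qed
qed

lemma mem_Cpi_iff:
  assumes "\<forall>s\<in>S. p s \<in> dual_ball B"
  shows "x \<in> Cpi B S p \<longleftrightarrow> subgradient_family B S x p"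
proof -
  have "x \<in> (\<lambda>y. s + y) ` N \<longleftrightarrow> x - s \<in> N" for s N
    by (auto simp: image_iff intro!: bexI[of _ "x - s"])
  then show ?thesis unfolding Cpi_def subgradient_family_def using mem_Ncone_iff assms by auto
qed

lemma bdd_above_skewness_ratios: "bdd_above {gauge B x / gauge B (- x) | x. x \<noteq> 0}"
proof -
  obtain r where r: "r > 0" "cball 0 r \<subseteq> B" by (rule obtain_cball_subset_B)
  obtain R where R: "R > 0" "\<And>x. x \<in> B \<Longrightarrow> norm x \<le> R"
    using obtain_norm_bound_B by metis
  have "gauge B x / gauge B (- x) \<le> R / r" if "x \<noteq> 0" for x
  proof -
    have "gauge B x * r \<le> norm x" using gauge_le_norm_divide[OF r, of x] r by (simp add: field_simps)
    also have "\<dots> \<le> R * gauge B (- x)" using norm_le_mult_gauge[OF R, of "- x"] by simp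
    finally show ?thesis using gauge_pos[of "- x"] that r by (simp add: field_simps)
  qed
  then show ?thesis by (intro bdd_aboveI[of _ "R / r"]) auto
qed

lemma gauge_le_skewness_mult: "gauge B x \<le> skewness B * gauge B (- x)"
proof (cases "x = 0")
  case False
  have "gauge B x / gauge B (- x) \<le> skewness B"
    unfolding skewness_def by (rule cSup_upper) (use False bdd_above_skewness_ratios in auto)
  then show ?thesis using gauge_pos[of "- x"] False by (simp add: field_simps)
qed simp

lemma skewness_nonneg: "0 \<le> skewness B"
proof -
  obtain b :: 'a where "b \<in> Basis" using nonempty_Basis by blast
  then have "b \<noteq> 0" by auto
  then have "gauge B b / gauge B (- b) \<le> skewness B"
    unfolding skewness_def by (intro cSup_upper) (use bdd_above_skewness_ratios in auto)
  moreover have "0 \<le> gauge B b / gauge B (- b)" using gauge_nonneg by simp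
  ultimately show ?thesis by linarith
qed

subsection \<open>Optimality conditions\<close>

lemma subgradient_family_exists: "\<exists>p. subgradient_family B S x p"
proof -
  have "\<forall>s. \<exists>q. q \<in> dual_ball B \<and> q \<bullet> (x - s) = gauge B (x - s)"
    using subgradient_exists by blast
  then show ?thesis unfolding subgradient_family_def by metis
qed

lemma subgradient_inequality:
  assumes "\<forall>s\<in>S. 0 \<le> u s" "subgradient_family B S y p"
  shows "fw_cost B S u y + (\<Sum>s\<in>S. u s *\<^sub>R p s) \<bullet> (z - y) \<le> fw_cost B S u z"
proof -
  have "fw_cost B S u y + (\<Sum>s\<in>S. u s *\<^sub>R p s) \<bullet> (z - y) = (\<Sum>s\<in>S. u s * (p s \<bullet> (z - s)))"
  proof -
    have "fw_cost B S u y = (\<Sum>s\<in>S. u s * (p s \<bullet> (y - s)))"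
      using assms(2) unfolding subgradient_family_def by (intro sum.cong) auto
    moreover have "u s * (p s \<bullet> (y - s)) + u s * (p s \<bullet> (z - y)) = u s * (p s \<bullet> (z - s))" for s
      by (simp add: inner_diff_right algebra_simps)
    ultimately show ?thesis by (simp add: inner_sum_left sum.distrib[symmetric])
  qed
  also have "\<dots> \<le> fw_cost B S u z"
  proof (rule sum_mono)
    fix s assume "s \<in> S"
    then have "p s \<bullet> (z - s) \<le> gauge B (z - s)"
      using assms(2) inner_le_gauge_if_dual_ball unfolding subgradient_family_def by blast
    then show "u s * (p s \<bullet> (z - s)) \<le> u s * gauge B (z - s)"
      using assms(1) \<open>s \<in> S\<close> by (simp add: mult_left_mono)
  qed
  finally show ?thesis .
qed

lemma subgradient_resultant_imp_tilted_FW: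
  assumes "\<forall>s\<in>S. 0 \<le> u s" "subgradient_family B S x p" "(\<Sum>s\<in>S. u s *\<^sub>R p s) = h"
  shows "x \<in> tilted_FW B S u h"
  unfolding tilted_FW_def
proof (intro CollectI allI)
  fix y
  show "fw_cost B S u x - h \<bullet> x \<le> fw_cost B S u y - h \<bullet> y"
    using subgradient_inequality[OF assms(1,2), of y] assms(3) by (simp add: inner_diff_right)
qed

lemma subgradient_family_limit:
  assumes "finite S" "\<And>n. subgradient_family B S (z n) (q n)" "z \<longlonglongrightarrow> x"
  shows "\<exists>r p. strict_mono r \<and> subgradient_family B S x p \<and> (\<forall>s\<in>S. (\<lambda>n. q (r n) s) \<longlonglongrightarrow> p s)"
proof -
  have "\<forall>n. \<forall>s\<in>S. q n s \<in> dual_ball B" using assms(2) by (auto simp: subgradient_family_def)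
  then obtain r p where r: "strict_mono r" "\<forall>s\<in>S. p s \<in> dual_ball B \<and> (\<lambda>n. q (r n) s) \<longlonglongrightarrow> p s"
    by (rule finite_family_convergent_subseq[OF assms(1) compact_dual_ball])
  have zr: "(\<lambda>n. z (r n)) \<longlonglongrightarrow> x" using LIMSEQ_subseq_LIMSEQ[OF assms(3) r(1)] by (simp add: comp_def)
  have "p s \<bullet> (x - s) = gauge B (x - s)" if "s \<in> S" for s
  proof -
    have "(\<lambda>n. q (r n) s \<bullet> (z (r n) - s)) \<longlonglongrightarrow> p s \<bullet> (x - s)"
      using r that zr by (intro tendsto_intros) auto
    moreover have "(\<lambda>n. q (r n) s \<bullet> (z (r n) - s)) = (\<lambda>n. gauge B (z (r n) - s))"
      using assms(2) that by (auto simp: subgradient_family_def)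
    moreover have "(\<lambda>n. gauge B (z (r n) - s)) \<longlonglongrightarrow> gauge B (x - s)"
      by (intro tendsto_intros zr)
    ultimately show ?thesis using LIMSEQ_unique by metis
  qed
  then have "subgradient_family B S x p" using r by (simp add: subgradient_family_def)
  then show ?thesis using r by blast
qed

lemma convex_subgradient_resultants:
  "convex {\<Sum>s\<in>S. u s *\<^sub>R p s | p. subgradient_family B S x p}"
proof (rule convexI)
  fix k1 k2 and a b :: real
  assume "k1 \<in> {\<Sum>s\<in>S. u s *\<^sub>R p s | p. subgradient_family B S x p}"
    "k2 \<in> {\<Sum>s\<in>S. u s *\<^sub>R p s | p. subgradient_family B S x p}"
    and ab: "0 \<le> a" "0 \<le> b" "a + b = 1"
  then obtain p1 p2 where p: "subgradient_family B S x p1" "subgradient_family B S x p2"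
    "k1 = (\<Sum>s\<in>S. u s *\<^sub>R p1 s)" "k2 = (\<Sum>s\<in>S. u s *\<^sub>R p2 s)" by blast
  define p where "p = (\<lambda>s. a *\<^sub>R p1 s + b *\<^sub>R p2 s)"
  have "subgradient_family B S x p"
    unfolding subgradient_family_def
  proof
    fix s assume "s \<in> S"
    then have "p1 s \<in> dual_ball B" "p2 s \<in> dual_ball B"
      "p1 s \<bullet> (x - s) = gauge B (x - s)" "p2 s \<bullet> (x - s) = gauge B (x - s)"
      using p(1,2) by (auto simp: subgradient_family_def)
    moreover have "p s \<bullet> (x - s) = a * (p1 s \<bullet> (x - s)) + b * (p2 s \<bullet> (x - s))"
      by (simp add: p_def inner_add_left)
    ultimately show "p s \<in> dual_ball B \<and> p s \<bullet> (x - s) = gauge B (x - s)"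
      using convexD[OF convex_dual_ball] ab by (simp add: p_def flip: distrib_right)
  qed
  moreover have "a *\<^sub>R k1 + b *\<^sub>R k2 = (\<Sum>s\<in>S. u s *\<^sub>R p s)"
    by (simp add: p p_def scaleR_sum_right sum.distrib scaleR_add_right mult.commute)
  ultimately show "a *\<^sub>R k1 + b *\<^sub>R k2 \<in> {\<Sum>s\<in>S. u s *\<^sub>R p s | p. subgradient_family B S x p}"
    by blast
qed

lemma closed_subgradient_resultants:
  assumes "finite S"
  shows "closed {\<Sum>s\<in>S. u s *\<^sub>R p s | p. subgradient_family B S x p}"
  unfolding closed_sequential_limits
proof (intro allI impI)
  fix k l
  assume kl: "(\<forall>n. k n \<in> {\<Sum>s\<in>S. u s *\<^sub>R p s | p. subgradient_family B S x p}) \<and> k \<longlonglongrightarrow> l"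
  then have "\<forall>n. \<exists>p. subgradient_family B S x p \<and> k n = (\<Sum>s\<in>S. u s *\<^sub>R p s)" by blast
  then obtain q where q: "\<And>n. subgradient_family B S x (q n)" "\<And>n. k n = (\<Sum>s\<in>S. u s *\<^sub>R q n s)"
    by metis
  obtain r p where r: "strict_mono r" "subgradient_family B S x p"
    "\<forall>s\<in>S. (\<lambda>n. q (r n) s) \<longlonglongrightarrow> p s"
    using subgradient_family_limit[where z = "\<lambda>_. x" and q = q, OF assms q(1) tendsto_const] by blast
  have "(\<lambda>n. k (r n)) \<longlonglongrightarrow> (\<Sum>s\<in>S. u s *\<^sub>R p s)"
    unfolding q(2) using r(3) by (intro tendsto_intros) auto
  moreover have "(\<lambda>n. k (r n)) \<longlonglongrightarrow> l"
    using LIMSEQ_subseq_LIMSEQ[OF conjunct2[OF kl] r(1)] by (simp add: comp_def)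
  ultimately have "l = (\<Sum>s\<in>S. u s *\<^sub>R p s)" using LIMSEQ_unique by blast
  then show "l \<in> {\<Sum>s\<in>S. u s *\<^sub>R p s | p. subgradient_family B S x p}" using r(2) by blast
qed

text \<open>If h were not a resultant at x, separate h from the
  closed convex set of resultants by a direction a; moving x slightly against a then decreases
  the tilted cost, by the subgradient inequality at the moved points and upper semicontinuity.\<close>

lemma tilted_FW_imp_subgradient_resultant:
  assumes "finite S" "\<forall>s\<in>S. 0 \<le> u s" "x \<in> tilted_FW B S u h"
  shows "\<exists>p. subgradient_family B S x p \<and> (\<Sum>s\<in>S. u s *\<^sub>R p s) = h"
proof (rule ccontr)
  let ?R = "{\<Sum>s\<in>S. u s *\<^sub>R p s | p. subgradient_family B S x p}"
  assume "\<not> ?thesis"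
  then have "h \<notin> ?R" by blast
  then obtain a b where ab: "a \<bullet> h < b" "\<forall>k\<in>?R. b < a \<bullet> k"
    using separating_hyperplane_closed_point[OF convex_subgradient_resultants
        closed_subgradient_resultants[OF assms(1)]] by blast
  define z where "z n = x - inverse (real (Suc n)) *\<^sub>R a" for n
  have "\<forall>n. \<exists>p. subgradient_family B S (z n) p" using subgradient_family_exists by blast
  then obtain q where q: "\<And>n. subgradient_family B S (z n) (q n)" by metis
  have resultant_le: "(\<Sum>s\<in>S. u s *\<^sub>R q n s) \<bullet> a \<le> h \<bullet> a" for n
  proof -
    define t where "t = inverse (real (Suc n))"
    have "x - z n = t *\<^sub>R a" by (simp add: z_def t_def)
    moreover have "fw_cost B S u (z n) + (\<Sum>s\<in>S. u s *\<^sub>R q n s) \<bullet> (x - z n) \<le> fw_cost B S u x"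
      by (rule subgradient_inequality[OF assms(2) q])
    moreover have "fw_cost B S u x - h \<bullet> x \<le> fw_cost B S u (z n) - h \<bullet> z n"
      using assms(3) by (simp add: tilted_FW_def)
    ultimately have "t * ((\<Sum>s\<in>S. u s *\<^sub>R q n s) \<bullet> a) \<le> t * (h \<bullet> a)"
      by (simp add: inner_diff_right algebra_simps)
    moreover have "t > 0" by (simp add: t_def)
    ultimately show ?thesis by simp
  qed
  have "z \<longlonglongrightarrow> x - 0 *\<^sub>R a"
    unfolding z_def by (intro tendsto_intros LIMSEQ_inverse_real_of_nat)
  then have "z \<longlonglongrightarrow> x" by simp
  obtain r p where r: "strict_mono r" "subgradient_family B S x p"
    "\<forall>s\<in>S. (\<lambda>n. q (r n) s) \<longlonglongrightarrow> p s"
    using subgradient_family_limit[where z = z and q = q, OF assms(1) q \<open>z \<longlonglongrightarrow> x\<close>] by blast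
  have "(\<lambda>n. (\<Sum>s\<in>S. u s *\<^sub>R q (r n) s) \<bullet> a) \<longlonglongrightarrow> (\<Sum>s\<in>S. u s *\<^sub>R p s) \<bullet> a"
    using r(3) by (intro tendsto_intros) auto
  then have "(\<Sum>s\<in>S. u s *\<^sub>R p s) \<bullet> a \<le> h \<bullet> a"
    using resultant_le by (intro LIMSEQ_le_const2) auto
  moreover have "b < a \<bullet> (\<Sum>s\<in>S. u s *\<^sub>R p s)" using ab(2) r(2) by blast
  ultimately show False using ab(1) by (simp add: inner_commute)
qed

lemma convex_on_fw_cost:
  assumes "\<forall>s\<in>S. 0 \<le> u s"
  shows "convex_on UNIV (fw_cost B S u)"
proof (rule convex_onI)
  fix t :: real and x y :: 'a assume t: "0 < t" "t < 1"
  have "fw_cost B S u ((1 - t) *\<^sub>R x + t *\<^sub>R y)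
      \<le> (\<Sum>s\<in>S. u s * ((1 - t) * gauge B (x - s) + t * gauge B (y - s)))"
  proof (rule sum_mono)
    fix s assume "s \<in> S"
    have "(1 - t) *\<^sub>R x + t *\<^sub>R y - s = (1 - t) *\<^sub>R (x - s) + t *\<^sub>R (y - s)"
      by (simp add: algebra_simps)
    then have "gauge B ((1 - t) *\<^sub>R x + t *\<^sub>R y - s) \<le> (1 - t) * gauge B (x - s) + t * gauge B (y - s)"
      using convex_onD[OF convex_on_gauge, of t "x - s" "y - s"] t by simp
    then show "u s * gauge B ((1 - t) *\<^sub>R x + t *\<^sub>R y - s)
        \<le> u s * ((1 - t) * gauge B (x - s) + t * gauge B (y - s))"
      using assms \<open>s \<in> S\<close> by (simp add: mult_left_mono)
  qed
  also have "\<dots> = (1 - t) * fw_cost B S u x + t * fw_cost B S u y"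
    unfolding sum_distrib_left sum.distrib[symmetric] by (intro sum.cong) (auto simp: algebra_simps)
  finally show "fw_cost B S u ((1 - t) *\<^sub>R x + t *\<^sub>R y) \<le> (1 - t) * fw_cost B S u x + t * fw_cost B S u y" .
qed simp

lemma convex_tilted_FW:
  assumes "\<forall>s\<in>S. 0 \<le> u s"
  shows "convex (tilted_FW B S u h)"
proof -
  have "concave_on UNIV (\<lambda>x. h \<bullet> x)"
    by (simp add: concave_on_iff inner_add_right)
  then have "convex_on UNIV (\<lambda>x. fw_cost B S u x - h \<bullet> x)"
    by (rule convex_on_diff[OF convex_on_fw_cost[OF assms]])
  then show ?thesis unfolding tilted_FW_def by (rule convex_minimizers)
qed

end

subsection \<open>The contamination locus\<close>

locale FW_setting = gauge_unit_ball B for B :: "'a::euclidean_space set" +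
  fixes D :: "'a set" and w :: "'a \<Rightarrow> real"
  assumes finite_D: "finite D" and D_nonempty: "D \<noteq> {}" and w_pos: "\<forall>d\<in>D. 0 < w d"
begin

lemma w_nonneg: "\<forall>d\<in>D. 0 \<le> w d"
  using w_pos by (simp add: less_imp_le)

lemma sum_w_pos: "0 < sum w D"
  using sum_pos[OF finite_D D_nonempty] w_pos by blast

lemma balanceable_0: "balanceable B D w 0"
  using sum_w_pos by (simp add: balanceable_def)

lemma balanceable_scaleR:
  assumes "0 \<le> t" "t \<le> 1" "balanceable B D w g"
  shows "balanceable B D w (t *\<^sub>R g)"
proof -
  have "dual_gauge B (t *\<^sub>R - g) \<le> t * dual_gauge B (- g)"
    using dual_gauge_scaleR_le assms(1) by blast
  also have "\<dots> \<le> dual_gauge B (- g)"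
    using assms(2) dual_gauge_nonneg mult_left_le_one_le assms(1) by blast
  finally show ?thesis
    using assms(3) skewness_nonneg mult_left_mono[of _ _ "skewness B"]
    unfolding balanceable_def by (smt (verit) scaleR_minus_right)
qed

lemma CL_imp_balanceable_subgradients:
  assumes "y \<in> CL B D w"
  shows "\<exists>p. subgradient_family B D y p \<and> balanceable B D w (\<Sum>s\<in>D. w s *\<^sub>R p s)"
proof -
  obtain C v where C: "finite C" "\<forall>c\<in>C. 0 < v c" "skewness B * sum v C < sum w D"
    and y: "y \<in> FW B (D \<union> C) (wsum_weight D w C v)"
    using assms unfolding CL_def by blast
  have nonneg: "\<forall>s\<in>D \<union> C. 0 \<le> wsum_weight D w C v s"
    unfolding wsum_weight_def using w_pos C(2) by (auto intro!: add_nonneg_nonneg simp: less_imp_le)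
  have "finite (D \<union> C)" using finite_D C(1) by simp
  moreover have "y \<in> tilted_FW B (D \<union> C) (wsum_weight D w C v) 0"
    using y by (simp add: FW_eq_tilted_FW_0)
  ultimately obtain p where p: "subgradient_family B (D \<union> C) y p"
    and "(\<Sum>s\<in>D \<union> C. wsum_weight D w C v s *\<^sub>R p s) = 0"
    using tilted_FW_imp_subgradient_resultant nonneg by blast
  then have "- (\<Sum>s\<in>D. w s *\<^sub>R p s) = (\<Sum>s\<in>C. v s *\<^sub>R p s)"
    using sum_wsum_weight[OF finite_D C(1), of w v p] by (simp add: neg_eq_iff_add_eq_0)
  moreover have "dual_gauge B (\<Sum>s\<in>C. v s *\<^sub>R p s) \<le> sum v C"
    using p C(2) by (intro dual_gauge_sum_le) (auto simp: subgradient_family_def less_imp_le)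
  ultimately have "balanceable B D w (\<Sum>s\<in>D. w s *\<^sub>R p s)"
    using C(3) skewness_nonneg mult_left_mono[of _ _ "skewness B"]
    unfolding balanceable_def by (smt (verit))
  moreover have "subgradient_family B D y p" using p by (simp add: subgradient_family_def)
  ultimately show ?thesis by blast
qed

lemma balanceable_subgradients_imp_CL:
  assumes p: "subgradient_family B D y p" and g: "balanceable B D w (\<Sum>s\<in>D. w s *\<^sub>R p s)"
  shows "y \<in> CL B D w"
proof -
  define g where "g = (\<Sum>s\<in>D. w s *\<^sub>R p s)"
  define v where "v = max (dual_gauge B (- g)) (sum w D / (skewness B + 1))"
  have v: "0 < v" "dual_gauge B (- g) \<le> v"
    using sum_w_pos skewness_nonneg by (auto simp: v_def less_max_iff_disj)
  have "skewness B * (sum w D / (skewness B + 1)) < sum w D"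
    using sum_w_pos skewness_nonneg by (simp add: field_simps)
  then have small: "skewness B * sum (\<lambda>_. v) {y} < sum w D"
    using g by (simp add: v_def balanceable_def g_def max_def)
  have "y \<in> FW B (D \<union> {y}) (wsum_weight D w {y} (\<lambda>_. v))"
    unfolding FW_def
  proof (intro CollectI allI)
    fix z
    have "- g \<bullet> (z - y) \<le> dual_gauge B (- g) * gauge B (z - y)"
      by (rule inner_le_dual_gauge_mult_gauge)
    also have "\<dots> \<le> v * gauge B (z - y)" using v gauge_nonneg by (simp add: mult_right_mono)
    finally have "fw_cost B D w y \<le> fw_cost B D w z + v * gauge B (z - y)"
      using subgradient_inequality[OF w_nonneg p, of z] by (simp add: g_def)
    then show "fw_cost B (D \<union> {y}) (wsum_weight D w {y} (\<lambda>_. v)) y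
        \<le> fw_cost B (D \<union> {y}) (wsum_weight D w {y} (\<lambda>_. v)) z"
      unfolding sum_wsum_weight_real[OF finite_D finite.insertI[OF finite.emptyI]] by simp
  qed
  moreover have "FW B (D \<union> {y}) (wsum_weight D w {y} (\<lambda>_. v)) \<in> {FW B (D \<union> C) (wsum_weight D w C v) | C v.
      finite C \<and> C \<noteq> {} \<and> (\<forall>c\<in>C. 0 < v c) \<and> skewness B * sum v C < sum w D}"
    by (intro CollectI exI[of _ "{y}"] exI[of _ "\<lambda>_. v"]) (use v(1) small in auto)
  ultimately show ?thesis unfolding CL_def by (rule UnionI[rotated])
qed

lemma mem_CL_iff:
  "y \<in> CL B D w \<longleftrightarrow> (\<exists>p. subgradient_family B D y p \<and> balanceable B D w (\<Sum>s\<in>D. w s *\<^sub>R p s))"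
  using CL_imp_balanceable_subgradients balanceable_subgradients_imp_CL by blast

lemma tilted_FW_subset_CL:
  assumes "balanceable B D w g" "0 \<le> t" "t \<le> 1"
  shows "tilted_FW B D w (t *\<^sub>R g) \<subseteq> CL B D w"
proof
  fix z assume "z \<in> tilted_FW B D w (t *\<^sub>R g)"
  then obtain p where "subgradient_family B D z p" "(\<Sum>s\<in>D. w s *\<^sub>R p s) = t *\<^sub>R g"
    using tilted_FW_imp_subgradient_resultant[OF finite_D w_nonneg] by blast
  then show "z \<in> CL B D w" using balanceable_scaleR[OF assms(2,3,1)] mem_CL_iff by auto
qed

lemma FW_subset_CL: "FW B D w \<subseteq> CL B D w"
  using tilted_FW_subset_CL[OF balanceable_0, of 1] by (simp add: FW_eq_tilted_FW_0)

lemma tilted_cost_coercive: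
  assumes "0 \<le> t" "t \<le> 1"
  shows "(sum w D - skewness B * dual_gauge B (- g)) * gauge B z - (\<Sum>s\<in>D. w s * gauge B s)
    \<le> fw_cost B D w z - (t *\<^sub>R g) \<bullet> z"
proof -
  have "(\<Sum>s\<in>D. w s * (gauge B z - gauge B s)) \<le> fw_cost B D w z"
  proof (rule sum_mono)
    fix s assume "s \<in> D"
    have "gauge B z \<le> gauge B (z - s) + gauge B s" using gauge_triangle[of "z - s" s] by simp
    then show "w s * (gauge B z - gauge B s) \<le> w s * gauge B (z - s)"
      using w_nonneg \<open>s \<in> D\<close> by (simp add: mult_left_mono)
  qed
  then have "sum w D * gauge B z - (\<Sum>s\<in>D. w s * gauge B s) \<le> fw_cost B D w z"
    by (simp add: right_diff_distrib sum_subtractf sum_distrib_right)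
  moreover have "(t *\<^sub>R g) \<bullet> z \<le> skewness B * dual_gauge B (- g) * gauge B z"
  proof -
    have "g \<bullet> z \<le> dual_gauge B (- g) * gauge B (- z)"
      using inner_le_dual_gauge_mult_gauge[of "- g" "- z"] by simp
    also have "\<dots> \<le> dual_gauge B (- g) * (skewness B * gauge B z)"
      using gauge_le_skewness_mult[of "- z"] dual_gauge_nonneg by (simp add: mult_left_mono)
    finally have "g \<bullet> z \<le> skewness B * dual_gauge B (- g) * gauge B z" by (simp add: mult_ac)
    moreover have "0 \<le> skewness B * dual_gauge B (- g) * gauge B z"
      using skewness_nonneg dual_gauge_nonneg gauge_nonneg by simp
    moreover have "t * (g \<bullet> z) \<le> max 0 (g \<bullet> z)"
      using assms by (cases "g \<bullet> z \<le> 0") (simp_all add: mult_nonneg_nonpos mult_left_le_one_le)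
    ultimately show ?thesis by simp
  qed
  ultimately show ?thesis by (simp add: algebra_simps)
qed

lemma bounded_Cpi_if_balanceable:
  assumes p: "\<forall>s\<in>D. p s \<in> dual_ball B" and g: "balanceable B D w (\<Sum>s\<in>D. w s *\<^sub>R p s)"
  shows "bounded (Cpi B D p)"
proof -
  define g where "g = (\<Sum>s\<in>D. w s *\<^sub>R p s)"
  define \<delta> where "\<delta> = sum w D - skewness B * dual_gauge B (- g)"
  define K where "K = (\<Sum>s\<in>D. w s * gauge B s) - (\<Sum>s\<in>D. w s * (p s \<bullet> s))"
  have \<delta>: "\<delta> > 0" using g by (simp add: \<delta>_def g_def balanceable_def)
  obtain R where R: "R > 0" "\<And>x. x \<in> B \<Longrightarrow> norm x \<le> R"
    using obtain_norm_bound_B by metis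
  have "norm z \<le> R * (K / \<delta>)" if "z \<in> Cpi B D p" for z
  proof -
    have "\<forall>s\<in>D. gauge B (z - s) = p s \<bullet> z - p s \<bullet> s"
      using that mem_Cpi_iff[OF p] by (simp add: subgradient_family_def inner_diff_right)
    then have "fw_cost B D w z = (\<Sum>s\<in>D. w s * (p s \<bullet> z) - w s * (p s \<bullet> s))"
      by (intro sum.cong) (simp_all add: right_diff_distrib)
    then have "fw_cost B D w z - (1 *\<^sub>R g) \<bullet> z = - (\<Sum>s\<in>D. w s * (p s \<bullet> s))"
      by (simp add: g_def sum_subtractf inner_sum_left)
    then have "\<delta> * gauge B z \<le> K"
      using tilted_cost_coercive[of 1 g z] by (simp add: \<delta>_def K_def)
    then have "gauge B z \<le> K / \<delta>" using \<delta> by (simp add: field_simps)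
    then have "R * gauge B z \<le> R * (K / \<delta>)" using R(1) by (intro mult_left_mono) auto
    then show ?thesis using norm_le_mult_gauge[OF R, of z] by simp
  qed
  then show ?thesis unfolding bounded_iff by blast
qed

lemma CL_eq_Union_bounded_elementary_convex:
  "\<exists>\<E>. (\<forall>E\<in>\<E>. elementary_convex B D E \<and> bounded E) \<and> CL B D w = \<Union>\<E>"
proof -
  define \<E> where "\<E> = {Cpi B D p | p. (\<forall>s\<in>D. p s \<in> dual_ball B)
      \<and> balanceable B D w (\<Sum>s\<in>D. w s *\<^sub>R p s) \<and> Cpi B D p \<noteq> {}}"
  have "elementary_convex B D E \<and> bounded E" if "E \<in> \<E>" for E
    using that bounded_Cpi_if_balanceable unfolding \<E>_def elementary_convex_def by blast
  moreover have "CL B D w = \<Union>\<E>"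
  proof
    show "CL B D w \<subseteq> \<Union>\<E>"
    proof
      fix y assume "y \<in> CL B D w"
      then obtain p where p: "subgradient_family B D y p" "balanceable B D w (\<Sum>s\<in>D. w s *\<^sub>R p s)"
        using mem_CL_iff by blast
      then have dual: "\<forall>s\<in>D. p s \<in> dual_ball B" by (simp add: subgradient_family_def)
      then have "y \<in> Cpi B D p" using mem_Cpi_iff p(1) by blast
      moreover have "Cpi B D p \<in> \<E>" unfolding \<E>_def using dual p(2) \<open>y \<in> Cpi B D p\<close> by blast
      ultimately show "y \<in> \<Union>\<E>" by blast
    qed
    show "\<Union>\<E> \<subseteq> CL B D w"
      unfolding \<E>_def using mem_Cpi_iff mem_CL_iff by blast
  qed
  ultimately show ?thesis by blast
qed

lemma tilted_FW_uniformly_bounded: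
  assumes "balanceable B D w g"
  shows "\<exists>M. \<forall>t\<in>{0..1}. tilted_FW B D w (t *\<^sub>R g) \<noteq> {} \<and> tilted_FW B D w (t *\<^sub>R g) \<subseteq> cball 0 M"
proof -
  define \<delta> where "\<delta> = sum w D - skewness B * dual_gauge B (- g)"
  define K where "K = (\<Sum>s\<in>D. w s * gauge B s)"
  have \<delta>: "\<delta> > 0" using assms by (simp add: \<delta>_def balanceable_def)
  obtain R where R: "R > 0" "\<And>x. x \<in> B \<Longrightarrow> norm x \<le> R"
    using obtain_norm_bound_B by metis
  define M where "M = R * ((fw_cost B D w 0 + K) / \<delta>)"
  have sublevel: "z \<in> cball 0 M"
    if t: "t \<in> {0..1}" and z: "fw_cost B D w z - (t *\<^sub>R g) \<bullet> z \<le> fw_cost B D w 0 - (t *\<^sub>R g) \<bullet> 0"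
    for t z
  proof -
    have "\<delta> * gauge B z - K \<le> fw_cost B D w 0"
      using tilted_cost_coercive[of t g z] t z by (simp add: \<delta>_def K_def)
    then have "gauge B z \<le> (fw_cost B D w 0 + K) / \<delta>" using \<delta> by (simp add: field_simps)
    then have "R * gauge B z \<le> M" unfolding M_def using R(1) by (intro mult_left_mono) auto
    then show ?thesis using norm_le_mult_gauge[OF R, of z] by simp
  qed
  have "tilted_FW B D w (t *\<^sub>R g) \<noteq> {} \<and> tilted_FW B D w (t *\<^sub>R g) \<subseteq> cball 0 M"
    if "t \<in> {0..1}" for t
  proof
    let ?f = "\<lambda>z. fw_cost B D w z - (t *\<^sub>R g) \<bullet> z"
    have "continuous_on UNIV ?f"
      by (intro continuous_intros continuous_on_compose2[OF continuous_on_gauge]) auto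
    then have "\<exists>x. \<forall>y. ?f x \<le> ?f y"
      using exists_minimizer_if_sublevel_compact[of ?f "cball 0 M" 0] sublevel[OF that] by auto
    then show "tilted_FW B D w (t *\<^sub>R g) \<noteq> {}"
      unfolding tilted_FW_def by blast
    show "tilted_FW B D w (t *\<^sub>R g) \<subseteq> cball 0 M"
    proof
      fix z assume "z \<in> tilted_FW B D w (t *\<^sub>R g)"
      then have "?f z \<le> ?f 0" unfolding tilted_FW_def by blast
      then show "z \<in> cball 0 M" by (rule sublevel[OF that])
    qed
  qed
  then show ?thesis by blast
qed

lemma closed_graph_tilted_FW: "closed (SIGMA t:{0..1}. tilted_FW B D w (t *\<^sub>R g))"
  unfolding closed_sequential_limits
proof (intro allI impI)
  fix x l assume x: "(\<forall>n. x n \<in> (SIGMA t:{0..1}. tilted_FW B D w (t *\<^sub>R g))) \<and> x \<longlonglongrightarrow> l"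
  define tn where "tn n = fst (x n)" for n
  define zn where "zn n = snd (x n)" for n
  have lim: "tn \<longlonglongrightarrow> fst l" "zn \<longlonglongrightarrow> snd l"
    unfolding tn_def zn_def using x by (auto intro: tendsto_fst tendsto_snd)
  have "(tn n, zn n) \<in> (SIGMA t:{0..1}. tilted_FW B D w (t *\<^sub>R g))" for n
    using x by (simp add: tn_def zn_def)
  then have mem: "tn n \<in> {0..1}" "zn n \<in> tilted_FW B D w (tn n *\<^sub>R g)" for n
    by blast+
  have "fst l \<in> {0..1}" using closed_sequentially[OF closed_atLeastAtMost mem(1) lim(1)] .
  moreover have "snd l \<in> tilted_FW B D w (fst l *\<^sub>R g)"
    unfolding tilted_FW_def
  proof (intro CollectI allI)
    fix y
    have "(\<lambda>n. fw_cost B D w (zn n) - (tn n *\<^sub>R g) \<bullet> zn n) \<longlonglongrightarrow> fw_cost B D w (snd l) - (fst l *\<^sub>R g) \<bullet> snd l"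
      using lim by (intro tendsto_intros)
    moreover have "(\<lambda>n. fw_cost B D w y - (tn n *\<^sub>R g) \<bullet> y) \<longlonglongrightarrow> fw_cost B D w y - (fst l *\<^sub>R g) \<bullet> y"
      using lim by (intro tendsto_intros)
    moreover have "fw_cost B D w (zn n) - (tn n *\<^sub>R g) \<bullet> zn n \<le> fw_cost B D w y - (tn n *\<^sub>R g) \<bullet> y" for n
      using mem(2)[of n] by (simp add: tilted_FW_def)
    ultimately show "fw_cost B D w (snd l) - (fst l *\<^sub>R g) \<bullet> snd l \<le> fw_cost B D w y - (fst l *\<^sub>R g) \<bullet> y"
      by (intro LIMSEQ_le) auto
  qed
  ultimately show "l \<in> (SIGMA t:{0..1}. tilted_FW B D w (t *\<^sub>R g))"
    by (cases l) simp
qed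

lemma connected_CL: "connected (CL B D w)"
proof -
  define \<S> where "\<S> = {S. connected S \<and> S \<subseteq> CL B D w \<and> FW B D w \<subseteq> S}"
  have "CL B D w \<subseteq> \<Union>\<S>"
  proof
    fix y assume "y \<in> CL B D w"
    then obtain p where p: "subgradient_family B D y p" "balanceable B D w (\<Sum>s\<in>D. w s *\<^sub>R p s)"
      using mem_CL_iff by blast
    define g where "g = (\<Sum>s\<in>D. w s *\<^sub>R p s)"
    let ?S = "\<Union>t\<in>{0..1}. tilted_FW B D w (t *\<^sub>R g)"
    have "balanceable B D w g" using p(2) by (simp add: g_def)
    then obtain M where M: "\<forall>t\<in>{0..1}. tilted_FW B D w (t *\<^sub>R g) \<noteq> {}
        \<and> tilted_FW B D w (t *\<^sub>R g) \<subseteq> cball 0 M"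
      using tilted_FW_uniformly_bounded by blast
    have "connected ?S"
      by (rule connected_UN_if_closed_graph[OF connected_Icc compact_cball closed_graph_tilted_FW])
        (use M convex_tilted_FW[OF w_nonneg] in \<open>auto intro: convex_connected\<close>)
    moreover have "?S \<subseteq> CL B D w"
    proof (rule UN_least)
      fix t :: real assume "t \<in> {0..1}"
      then show "tilted_FW B D w (t *\<^sub>R g) \<subseteq> CL B D w"
        using tilted_FW_subset_CL p(2) by (simp add: g_def)
    qed
    moreover have "FW B D w \<subseteq> ?S" using FW_eq_tilted_FW_0[of B D w] by force
    moreover have "y \<in> tilted_FW B D w g"
      using subgradient_resultant_imp_tilted_FW[OF w_nonneg p(1)] by (simp add: g_def)
    then have "y \<in> ?S" by (intro UN_I[of 1]) auto
    ultimately show "y \<in> \<Union>\<S>" unfolding \<S>_def by blast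
  qed
  moreover have "\<Union>\<S> \<subseteq> CL B D w" unfolding \<S>_def by blast
  moreover obtain M where "\<forall>t\<in>{0..1}. tilted_FW B D w (t *\<^sub>R 0) \<noteq> {}
      \<and> tilted_FW B D w (t *\<^sub>R 0) \<subseteq> cball 0 M"
    using tilted_FW_uniformly_bounded[OF balanceable_0] by blast
  from this[rule_format, of 0] have "FW B D w \<noteq> {}" by (simp add: FW_eq_tilted_FW_0)
  then have "connected (\<Union>\<S>)" by (intro connected_Union) (auto simp: \<S>_def)
  ultimately show ?thesis by (simp add: subset_antisym)
qed

end

theorem mainTheorem19:
  fixes B :: "'a::euclidean_space set" and D :: "'a set" and w :: "'a \<Rightarrow> real"
  assumes "gauge_ball B"
    and "finite D" and "D \<noteq> {}" and "\<forall>d\<in>D. 0 < w d"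
  shows "connected (CL B D w)
    \<and> FW B D w \<subseteq> CL B D w
    \<and> CL B D w \<subseteq> EH B D
    \<and> (\<exists>\<E>. (\<forall>E\<in>\<E>. elementary_convex B D E \<and> bounded E) \<and> CL B D w = \<Union>\<E>)"
proof -
  interpret FW_setting B D w
    by unfold_locales (use assms in auto)
  obtain \<E> where \<E>: "\<forall>E\<in>\<E>. elementary_convex B D E \<and> bounded E" "CL B D w = \<Union>\<E>"
    using CL_eq_Union_bounded_elementary_convex by blast
  then have "CL B D w \<subseteq> EH B D" unfolding EH_def by blast
  then show ?thesis using connected_CL FW_subset_CL \<E> by blast
qed

end
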